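(* For every integer $n\geq 0$, $$C_3(n+1)=\sum_{i=0}^{n}\binom{n}{i}E_3(i),$$ with the convention $E_3(0)=1$.
   Context: The arc diagram of a set partition $P$ of $[n]=\{1,\ldots,n\}$: place nodes $1,\ldots,n$ on a line and draw an arc $(i,j)$, $i<j$, whenever $i$ and $j$ lie in the same block of $P$ and no element $l$ of that block satisfies $i<l<j$. A $3$-crossing of $P$ is a triple of arcs $(i_1,j_1),(i_2,j_2),(i_3,j_3)$ with $i_1<i_2<i_3<j_1<j_2<j_3$; an enhanced $3$-crossing is such a triple with $i_1<i_2<i_3\leq j_1<j_2<j_3$. $C_3(n)$ (resp. $E_3(n)$) is the number of partitions of $[n]$ with no $3$-crossing (resp. no enhanced $3$-crossing). *)

theory Defs
  imports Main
begin

definition is_set_partition :: "nat set \<Rightarrow> nat set set \<Rightarrow> bool" where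
  "is_set_partition A P \<longleftrightarrow>
     (\<forall>B\<in>P. B \<noteq> {}) \<and> \<Union>P = A \<and> (\<forall>B\<in>P. \<forall>B'\<in>P. B \<noteq> B' \<longrightarrow> B \<inter> B' = {})"

definition arc :: "nat set set \<Rightarrow> nat \<Rightarrow> nat \<Rightarrow> bool" where
  "arc P i j \<longleftrightarrow> i < j \<and> (\<exists>B\<in>P. i \<in> B \<and> j \<in> B \<and> (\<forall>l\<in>B. \<not> (i < l \<and> l < j)))"

definition has_3_crossing :: "nat set set \<Rightarrow> bool" where
  "has_3_crossing P \<longleftrightarrow> (\<exists>i1 j1 i2 j2 i3 j3.
      arc P i1 j1 \<and> arc P i2 j2 \<and> arc P i3 j3 \<and>
      i1 < i2 \<and> i2 < i3 \<and> i3 < j1 \<and> j1 < j2 \<and> j2 < j3)"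

definition has_enhanced_3_crossing :: "nat set set \<Rightarrow> bool" where
  "has_enhanced_3_crossing P \<longleftrightarrow> (\<exists>i1 j1 i2 j2 i3 j3.
      arc P i1 j1 \<and> arc P i2 j2 \<and> arc P i3 j3 \<and>
      i1 < i2 \<and> i2 < i3 \<and> i3 \<le> j1 \<and> j1 < j2 \<and> j2 < j3)"

definition C3 :: "nat \<Rightarrow> nat" where
  "C3 n = card {P. is_set_partition {1..n} P \<and> \<not> has_3_crossing P}"

text \<open>For n = 0 the only partition of the empty set is the empty partition, so E3 0 = 1,
  matching the paper's convention.\<close>
definition E3 :: "nat \<Rightarrow> nat" where
  "E3 n = card {P. is_set_partition {1..n} P \<and> \<not> has_enhanced_3_crossing P}"

end

theory Submission
  imports Defs
begin

text \<open>A partition of \<open>A\<close> is determined by its arc diagram, and the arc diagrams on \<open>A\<close> are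
  exactly the sets of arcs \<open>i < j\<close> in \<open>A\<close> in which every node has at most one arc to its right and
  at most one arc to its left. Given such an arc set on \<open>{1..n+1}\<close>, delete every arc \<open>(v, v+1)\<close>
  together with the node \<open>v\<close>, and shorten every other arc \<open>(i, j)\<close> to \<open>(i, j-1)\<close>. This is a
  bijection onto the pairs \<open>(S, R)\<close> of a set \<open>S \<subseteq> {1..n}\<close> and an arc set \<open>R\<close> on \<open>S\<close>. Arcs of
  length one never belong to a 3-crossing, and shortening turns the condition \<open>i3 < j1\<close> into
  \<open>i3 \<le> j1 - 1\<close>, so 3-crossings correspond exactly to enhanced 3-crossings. Finally, the number
  of arc sets on \<open>S\<close> without enhanced 3-crossing is \<open>E3 |S|\<close>, by relabelling \<open>S\<close> monotonically,
  and summing over \<open>S\<close> gives the binomial sum.\<close>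

definition arc_set :: "nat set \<Rightarrow> (nat \<times> nat) set \<Rightarrow> bool" where
  "arc_set A R \<longleftrightarrow> R \<subseteq> A \<times> A \<and> (\<forall>(i, j) \<in> R. i < j) \<and> single_valued R \<and> single_valued (R\<inverse>)"

definition crossing3 :: "(nat \<times> nat) set \<Rightarrow> bool" where
  "crossing3 R \<longleftrightarrow> (\<exists>i1 j1 i2 j2 i3 j3. (i1, j1) \<in> R \<and> (i2, j2) \<in> R \<and> (i3, j3) \<in> R \<and>
      i1 < i2 \<and> i2 < i3 \<and> i3 < j1 \<and> j1 < j2 \<and> j2 < j3)"

definition enhanced_crossing3 :: "(nat \<times> nat) set \<Rightarrow> bool" where
  "enhanced_crossing3 R \<longleftrightarrow> (\<exists>i1 j1 i2 j2 i3 j3. (i1, j1) \<in> R \<and> (i2, j2) \<in> R \<and> (i3, j3) \<in> R \<and>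
      i1 < i2 \<and> i2 < i3 \<and> i3 \<le> j1 \<and> j1 < j2 \<and> j2 < j3)"

definition arcs :: "nat set set \<Rightarrow> (nat \<times> nat) set" where
  "arcs P = {(i, j). arc P i j}"

lemma has_3_crossing_iff_crossing3: "has_3_crossing P \<longleftrightarrow> crossing3 (arcs P)"
  by (simp add: has_3_crossing_def crossing3_def arcs_def)

lemma has_enhanced_3_crossing_iff_enhanced_crossing3:
  "has_enhanced_3_crossing P \<longleftrightarrow> enhanced_crossing3 (arcs P)"
  by (simp add: has_enhanced_3_crossing_def enhanced_crossing3_def arcs_def)

lemma arc_setD:
  assumes "arc_set A R"
  shows arc_set_subset: "R \<subseteq> A \<times> A"
    and arc_set_less: "(i, j) \<in> R \<Longrightarrow> i < j"
    and arc_set_right_unique: "(i, j) \<in> R \<Longrightarrow> (i, k) \<in> R \<Longrightarrow> j = k"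
    and arc_set_left_unique: "(i, k) \<in> R \<Longrightarrow> (j, k) \<in> R \<Longrightarrow> i = j"
  using assms by (auto simp: arc_set_def dest: single_valuedD)

section \<open>Partitions are determined by their arcs\<close>

lemma set_partition_block_unique:
  assumes "is_set_partition A P" "B \<in> P" "B' \<in> P" "x \<in> B" "x \<in> B'"
  shows "B = B'"
  using assms unfolding is_set_partition_def by blast

lemma arc_set_arcs:
  assumes P: "is_set_partition A P"
  shows "arc_set A (arcs P)"
proof -
  have nearest: "j = k" if "B \<in> P" "i \<in> B" "j \<in> B" "k \<in> B" "i < j" "i < k"
    "\<forall>l\<in>B. \<not> (i < l \<and> l < j)" "\<forall>l\<in>B. \<not> (i < l \<and> l < k)" for B i j k
    using that by (metis linorder_neqE_nat)
  have nearest': "i = j" if "B \<in> P" "i \<in> B" "j \<in> B" "k \<in> B" "i < k" "j < k"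
    "\<forall>l\<in>B. \<not> (i < l \<and> l < k)" "\<forall>l\<in>B. \<not> (j < l \<and> l < k)" for B i j k
    using that by (metis linorder_neqE_nat)
  show ?thesis
    unfolding arc_set_def single_valued_def
  proof (intro conjI allI impI)
    show "arcs P \<subseteq> A \<times> A"
      using P unfolding arcs_def arc_def is_set_partition_def by blast
    show "\<forall>(i, j) \<in> arcs P. i < j"
      by (simp add: arcs_def arc_def)
  next
    fix i j k assume "(i, j) \<in> arcs P" "(i, k) \<in> arcs P"
    then show "j = k"
      using nearest set_partition_block_unique[OF P] unfolding arcs_def arc_def by blast
  next
    fix k i j assume "(k, i) \<in> (arcs P)\<inverse>" "(k, j) \<in> (arcs P)\<inverse>"
    then show "i = j"
      using nearest' set_partition_block_unique[OF P] unfolding arcs_def arc_def by blast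
  qed
qed

lemma rtrancl_arcs_if_same_block:
  assumes P: "is_set_partition A P" and B: "B \<in> P"
  shows "x \<in> B \<Longrightarrow> y \<in> B \<Longrightarrow> x \<le> y \<Longrightarrow> (x, y) \<in> (arcs P)\<^sup>*"
proof (induction "y - x" arbitrary: x rule: less_induct)
  case less
  show ?case
  proof (cases "x = y")
    case False
    define z where "z = (LEAST l. l \<in> B \<and> x < l)"
    have y: "y \<in> B \<and> x < y"
      using less.prems False by auto
    have z: "z \<in> B \<and> x < z"
      unfolding z_def by (rule LeastI[of _ y]) (rule y)
    have "z \<le> y"
      unfolding z_def by (rule Least_le) (rule y)
    have nearest: "\<forall>l\<in>B. \<not> (x < l \<and> l < z)"
      unfolding z_def using not_less_Least by blast
    have "(x, z) \<in> arcs P"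
      using z nearest B less.prems(1) by (auto simp: arcs_def arc_def)
    moreover have "(z, y) \<in> (arcs P)\<^sup>*"
      using less.hyps[of z] z \<open>z \<le> y\<close> less.prems by auto
    ultimately show ?thesis
      by (rule converse_rtrancl_into_rtrancl)
  qed simp
qed

lemma arc_set_rtrancl_le:
  assumes "arc_set A R" "(x, y) \<in> R\<^sup>*"
  shows "x \<le> y"
  using assms(2) by induction (auto dest: arc_set_less[OF assms(1)])

text \<open>Every node has at most one outgoing and at most one incoming arc, so a connected
  component is a single chain of arcs.\<close>
lemma arc_set_rtrancl_symcl:
  assumes R: "arc_set A R" and xy: "(x, y) \<in> (R \<union> R\<inverse>)\<^sup>*"
  shows "(x, y) \<in> R\<^sup>* \<or> (y, x) \<in> R\<^sup>*"
  using xy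
proof induction
  case (step y z)
  consider "(y, z) \<in> R" | "(z, y) \<in> R"
    using step.hyps(2) by blast
  then show ?case
  proof cases
    case 1
    have "(x, z) \<in> R\<^sup>* \<or> (z, x) \<in> R\<^sup>*" if "(y, x) \<in> R\<^sup>*"
      using that
    proof (cases rule: converse_rtranclE)
      case (step w)
      then show ?thesis
        using arc_set_right_unique[OF R 1] by blast
    qed (use 1 in auto)
    then show ?thesis
      using step.IH 1 by (blast intro: rtrancl_into_rtrancl)
  next
    case 2
    have "(x, z) \<in> R\<^sup>* \<or> (z, x) \<in> R\<^sup>*" if "(x, y) \<in> R\<^sup>*"
      using that
    proof (cases rule: rtranclE)
      case (step w)
      then show ?thesis
        using arc_set_left_unique[OF R 2] by blast
    qed (use 2 in auto)
    then show ?thesis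
      using step.IH 2 by (blast intro: converse_rtrancl_into_rtrancl)
  qed
qed simp

lemma arc_set_rtrancl_symcl_le:
  assumes "arc_set A R" "(x, y) \<in> (R \<union> R\<inverse>)\<^sup>*" "x \<le> y"
  shows "(x, y) \<in> R\<^sup>*"
  using arc_set_rtrancl_symcl[OF assms(1,2)] arc_set_rtrancl_le[OF assms(1), of y x] assms(3)
  by auto

definition arc_equiv :: "nat set \<Rightarrow> (nat \<times> nat) set \<Rightarrow> (nat \<times> nat) set" where
  "arc_equiv A R = (R \<union> R\<inverse>)\<^sup>* \<inter> A \<times> A"

lemma equiv_arc_equiv: "equiv A (arc_equiv A R)"
proof (rule equivI)
  show "arc_equiv A R \<subseteq> A \<times> A"
    by (simp add: arc_equiv_def)
  show "refl_on A (arc_equiv A R)"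
    by (auto simp: arc_equiv_def refl_on_def)
  show "sym (arc_equiv A R)"
    unfolding arc_equiv_def
    by (intro sym_Int sym_rtrancl) (auto simp: sym_def)
  show "trans (arc_equiv A R)"
    unfolding arc_equiv_def by (intro trans_Int trans_rtrancl) (auto simp: trans_def)
qed

lemma is_set_partition_quotient:
  assumes "equiv A r"
  shows "is_set_partition A (A // r)"
  using assms unfolding is_set_partition_def
  by (auto simp: Union_quotient dest: in_quotient_imp_non_empty quotient_disj)

lemma quotient_arc_equiv_arcs:
  assumes P: "is_set_partition A P"
  shows "A // arc_equiv A (arcs P) = P"
proof -
  let ?R = "arcs P"
  let ?E = "arc_equiv A ?R"
  have union: "\<Union>P = A"
    using P by (simp add: is_set_partition_def)
  have block_eq_class: "?E `` {x} = B" if B: "B \<in> P" and x: "x \<in> B" for B x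
  proof
    show "?E `` {x} \<subseteq> B"
    proof
      fix y assume "y \<in> ?E `` {x}"
      then have "(x, y) \<in> (?R \<union> ?R\<inverse>)\<^sup>*"
        by (simp add: arc_equiv_def)
      then show "y \<in> B"
      proof induction
        case (step y z)
        then obtain B' where "B' \<in> P" "y \<in> B'" "z \<in> B'"
          by (auto simp: arcs_def arc_def)
        then show ?case
          using set_partition_block_unique[OF P B] step.IH by blast
      qed (rule x)
    qed
    show "B \<subseteq> ?E `` {x}"
    proof
      fix y assume y: "y \<in> B"
      have "(x, y) \<in> ?R\<^sup>* \<or> (y, x) \<in> ?R\<^sup>*"
        using rtrancl_arcs_if_same_block[OF P B x y] rtrancl_arcs_if_same_block[OF P B y x]
        by linarith
      then have "(x, y) \<in> (?R \<union> ?R\<inverse>)\<^sup>*"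
        by (metis converse_Un converse_converse rtrancl_converseI rtrancl_mono
            sup_commute sup_ge1 subsetD)
      moreover have "x \<in> A" "y \<in> A"
        using union B x y by blast+
      ultimately show "y \<in> ?E `` {x}"
        by (simp add: arc_equiv_def)
    qed
  qed
  show ?thesis
  proof (intro set_eqI iffI)
    fix X assume "X \<in> A // ?E"
    then obtain x where x: "x \<in> A" "X = ?E `` {x}"
      by (metis quotientE)
    moreover obtain B where "B \<in> P" "x \<in> B"
      using union x(1) by blast
    ultimately show "X \<in> P"
      using block_eq_class[of B x] by simp
  next
    fix B assume B: "B \<in> P"
    then have "B \<noteq> {}"
      using P by (simp add: is_set_partition_def)
    then obtain x where x: "x \<in> B"
      by blast
    then have "x \<in> A"
      using union B by blast
    then show "B \<in> A // ?E"
      using block_eq_class[OF B x] by (metis quotientI)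
  qed
qed

lemma arc_quotient_iff:
  assumes "equiv A r"
  shows "arc (A // r) i j \<longleftrightarrow> i < j \<and> (i, j) \<in> r \<and> (\<forall>l. (i, l) \<in> r \<longrightarrow> \<not> (i < l \<and> l < j))"
proof
  assume "arc (A // r) i j"
  then obtain x where "x \<in> A" "i \<in> r `` {x}" "j \<in> r `` {x}" "i < j"
    and between: "\<forall>l \<in> r `` {x}. \<not> (i < l \<and> l < j)"
    unfolding arc_def by (auto elim!: quotientE)
  moreover from this have "r `` {i} = r `` {x}"
    using assms by (metis Image_singleton_iff equiv_class_eq_iff)
  ultimately show "i < j \<and> (i, j) \<in> r \<and> (\<forall>l. (i, l) \<in> r \<longrightarrow> \<not> (i < l \<and> l < j))"
    by blast
next
  assume *: "i < j \<and> (i, j) \<in> r \<and> (\<forall>l. (i, l) \<in> r \<longrightarrow> \<not> (i < l \<and> l < j))"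
  then have "i \<in> A"
    using assms by (auto simp: equiv_def)
  then have "r `` {i} \<in> A // r" "i \<in> r `` {i}"
    using assms by (auto intro: quotientI simp: equiv_def refl_on_def)
  then show "arc (A // r) i j"
    using * unfolding arc_def by blast
qed

lemma arcs_quotient_arc_equiv:
  assumes R: "arc_set A R"
  shows "arcs (A // arc_equiv A R) = R"
proof -
  have sub: "R \<subseteq> A \<times> A"
    using arc_set_subset[OF R] .
  have step_in: "(i, w) \<in> arc_equiv A R" if "(i, w) \<in> R" for i w
    using that sub by (auto simp: arc_equiv_def)
  have forward: "(i, l) \<in> R\<^sup>*" if "(i, l) \<in> arc_equiv A R" "i \<le> l" for i l
    using that arc_set_rtrancl_symcl_le[OF R] by (simp add: arc_equiv_def)
  show ?thesis
  proof (intro set_eqI iffI; clarify)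
    fix i j assume "(i, j) \<in> arcs (A // arc_equiv A R)"
    then have ij: "i < j" "(i, j) \<in> arc_equiv A R"
      and between: "\<forall>l. (i, l) \<in> arc_equiv A R \<longrightarrow> \<not> (i < l \<and> l < j)"
      by (simp_all add: arcs_def arc_quotient_iff[OF equiv_arc_equiv])
    from forward[OF ij(2)] ij(1) obtain w where w: "(i, w) \<in> R" "(w, j) \<in> R\<^sup>*"
      by (auto elim: converse_rtranclE)
    have "i < w" "w \<le> j"
      using arc_set_less[OF R w(1)] arc_set_rtrancl_le[OF R w(2)] .
    then have "w = j"
      using between step_in[OF w(1)] by fastforce
    then show "(i, j) \<in> R"
      using w(1) by simp
  next
    fix i j assume ij: "(i, j) \<in> R"
    have "\<not> (i < l \<and> l < j)" if "(i, l) \<in> arc_equiv A R" for l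
    proof
      assume l: "i < l \<and> l < j"
      from forward[OF that] l obtain w where "(i, w) \<in> R" "(w, l) \<in> R\<^sup>*"
        by (auto elim: converse_rtranclE)
      then show False
        using arc_set_right_unique[OF R ij] arc_set_rtrancl_le[OF R] l by fastforce
    qed
    then show "(i, j) \<in> arcs (A // arc_equiv A R)"
      using ij arc_set_less[OF R ij] step_in
      by (simp add: arcs_def arc_quotient_iff[OF equiv_arc_equiv])
  qed
qed

lemma bij_betw_arcs: "bij_betw arcs {P. is_set_partition A P} {R. arc_set A R}"
  by (rule bij_betw_byWitness[where f' = "\<lambda>R. A // arc_equiv A R"])
    (auto simp: quotient_arc_equiv_arcs arcs_quotient_arc_equiv arc_set_arcs
      is_set_partition_quotient equiv_arc_equiv)

section \<open>Shortening arcs\<close>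

definition shorten :: "(nat \<times> nat) set \<Rightarrow> (nat \<times> nat) set" where
  "shorten Q = {(i, j). (i, Suc j) \<in> Q \<and> i < j}"

definition unit_arc_starts :: "(nat \<times> nat) set \<Rightarrow> nat set" where
  "unit_arc_starts Q = {v. (v, Suc v) \<in> Q}"

definition lengthen :: "(nat \<times> nat) set \<Rightarrow> nat set \<Rightarrow> (nat \<times> nat) set" where
  "lengthen R U = map_prod id Suc ` R \<union> (\<lambda>v. (v, Suc v)) ` U"

lemma crossing3_iff_enhanced_crossing3_shorten:
  "crossing3 Q \<longleftrightarrow> enhanced_crossing3 (shorten Q)"
proof
  assume "crossing3 Q"
  then obtain i1 j1 i2 j2 i3 j3 where
    arcs: "(i1, j1) \<in> Q" "(i2, j2) \<in> Q" "(i3, j3) \<in> Q" and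
    order: "i1 < i2" "i2 < i3" "i3 < j1" "j1 < j2" "j2 < j3"
    unfolding crossing3_def by blast
  have "(i, j - 1) \<in> shorten Q" if "(i, j) \<in> Q" "Suc i < j" for i j
    using that by (simp add: shorten_def)
  then have "(i1, j1 - 1) \<in> shorten Q" "(i2, j2 - 1) \<in> shorten Q" "(i3, j3 - 1) \<in> shorten Q"
    using arcs order by simp_all
  moreover have "i3 \<le> j1 - 1" "j1 - 1 < j2 - 1" "j2 - 1 < j3 - 1"
    using order by simp_all
  ultimately show "enhanced_crossing3 (shorten Q)"
    unfolding enhanced_crossing3_def using order(1,2) by blast
next
  assume "enhanced_crossing3 (shorten Q)"
  then obtain i1 j1 i2 j2 i3 j3 where
    arcs: "(i1, j1) \<in> shorten Q" "(i2, j2) \<in> shorten Q" "(i3, j3) \<in> shorten Q" and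
    order: "i1 < i2" "i2 < i3" "i3 \<le> j1" "j1 < j2" "j2 < j3"
    unfolding enhanced_crossing3_def by blast
  from arcs have "(i1, Suc j1) \<in> Q" "(i2, Suc j2) \<in> Q" "(i3, Suc j3) \<in> Q"
    by (simp_all add: shorten_def)
  moreover have "i3 < Suc j1" "Suc j1 < Suc j2" "Suc j2 < Suc j3"
    using order by simp_all
  ultimately show "crossing3 Q"
    unfolding crossing3_def using order(1,2) by blast
qed

lemma arc_set_shorten:
  assumes Q: "arc_set {1..Suc n} Q"
  shows "arc_set ({1..n} - unit_arc_starts Q) (shorten Q)"
proof -
  have "shorten Q \<subseteq> ({1..n} - unit_arc_starts Q) \<times> ({1..n} - unit_arc_starts Q)"
  proof clarify
    fix i j assume ij: "(i, j) \<in> shorten Q"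
    then have arc: "(i, Suc j) \<in> Q" and "i < j"
      by (simp_all add: shorten_def)
    have "(i, Suc i) \<notin> Q"
      using arc_set_right_unique[OF Q arc, of "Suc i"] \<open>i < j\<close> by blast
    moreover have "(j, Suc j) \<notin> Q"
      using arc_set_left_unique[OF Q arc, of j] \<open>i < j\<close> by blast
    moreover have "1 \<le> i" "Suc j \<le> Suc n"
      using arc_set_subset[OF Q] arc by auto
    ultimately show "i \<in> {1..n} - unit_arc_starts Q \<and> j \<in> {1..n} - unit_arc_starts Q"
      using \<open>i < j\<close> by (simp add: unit_arc_starts_def)
  qed
  moreover have "single_valued (shorten Q)" "single_valued ((shorten Q)\<inverse>)"
    using arc_set_right_unique[OF Q] arc_set_left_unique[OF Q]
    by (auto simp: single_valued_def shorten_def)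
  ultimately show ?thesis
    by (auto simp: arc_set_def shorten_def)
qed

lemma arc_set_lengthen:
  assumes R: "arc_set S R" and S: "S \<subseteq> {1..n}"
  shows "arc_set {1..Suc n} (lengthen R ({1..n} - S))"
proof -
  have "R \<subseteq> {1..n} \<times> {1..n}"
    using arc_set_subset[OF R] S by blast
  moreover have "(i, j) \<in> R \<Longrightarrow> i \<noteq> j" for i j
    using arc_set_less[OF R] by blast
  ultimately show ?thesis
    using R S unfolding arc_set_def single_valued_def lengthen_def
    by (auto simp: less_Suc_eq)
qed

lemma lengthen_shorten:
  assumes Q: "arc_set A Q"
  shows "lengthen (shorten Q) (unit_arc_starts Q) = Q"
proof -
  have "(i, j) \<in> lengthen (shorten Q) (unit_arc_starts Q)" if ij: "(i, j) \<in> Q" for i j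
  proof (cases "j = Suc i")
    case True
    then show ?thesis
      using ij by (auto simp: lengthen_def unit_arc_starts_def)
  next
    case False
    then have "Suc i < j"
      using arc_set_less[OF Q ij] by simp
    then have "(i, j - 1) \<in> shorten Q" and "(i, j) = map_prod id Suc (i, j - 1)"
      using ij by (simp_all add: shorten_def)
    then show ?thesis
      unfolding lengthen_def by blast
  qed
  then show ?thesis
    by (auto simp: lengthen_def shorten_def unit_arc_starts_def)
qed

lemma shorten_lengthen:
  assumes "arc_set A R"
  shows "shorten (lengthen R U) = R"
  by (force simp: shorten_def lengthen_def dest: arc_set_less[OF assms])

lemma unit_arc_starts_lengthen:
  assumes "arc_set A R"
  shows "unit_arc_starts (lengthen R U) = U"
  by (auto simp: unit_arc_starts_def lengthen_def dest: arc_set_less[OF assms])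

lemma bij_betw_shorten:
  "bij_betw (\<lambda>Q. ({1..n} - unit_arc_starts Q, shorten Q)) {Q. arc_set {1..Suc n} Q}
     (SIGMA S:Pow {1..n}. {R. arc_set S R})"
proof (rule bij_betw_byWitness[where f' = "\<lambda>(S, R). lengthen R ({1..n} - S)"]; clarify)
  fix Q assume Q: "arc_set {1..Suc n} Q"
  have "unit_arc_starts Q \<subseteq> {1..n}"
    using arc_set_subset[OF Q] by (auto simp: unit_arc_starts_def)
  then show "lengthen (shorten Q) ({1..n} - ({1..n} - unit_arc_starts Q)) = Q"
    using lengthen_shorten[OF Q] by (simp add: double_diff)
  show "{1..n} - unit_arc_starts Q \<in> Pow {1..n} \<and>
      shorten Q \<in> Collect (arc_set ({1..n} - unit_arc_starts Q))"
    using arc_set_shorten[OF Q] by simp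
next
  fix S R assume S: "S \<subseteq> {1..n}" and R: "arc_set S R"
  show "{1..n} - unit_arc_starts (lengthen R ({1..n} - S)) = S \<and>
      shorten (lengthen R ({1..n} - S)) = R"
    using S by (simp add: unit_arc_starts_lengthen[OF R] shorten_lengthen[OF R] double_diff)
  show "arc_set {1..Suc n} (lengthen R ({1..n} - S))"
    using arc_set_lengthen[OF R S] .
qed

section \<open>Monotone relabelling\<close>

lemma single_valued_map_prod_image_iff:
  assumes "inj_on f (Domain R)" "inj_on h (Range R)"
  shows "single_valued (map_prod f h ` R) \<longleftrightarrow> single_valued R"
proof
  assume sv: "single_valued (map_prod f h ` R)"
  show "single_valued R"
  proof (rule single_valuedI)
    fix x y z assume "(x, y) \<in> R" "(x, z) \<in> R"
    then have "h y = h z" "y \<in> Range R" "z \<in> Range R"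
      using single_valuedD[OF sv, of "f x" "h y" "h z"] by force+
    then show "y = z"
      using assms(2) by (simp add: inj_on_eq_iff)
  qed
next
  assume sv: "single_valued R"
  show "single_valued (map_prod f h ` R)"
  proof (rule single_valuedI; clarsimp)
    fix x y x' z assume xy: "(x, y) \<in> R" and xz: "(x', z) \<in> R" and "f x = f x'"
    then have "x = x'"
      using assms(1) by (blast dest: inj_onD)
    then show "h y = h z"
      using single_valuedD[OF sv xy] xz by simp
  qed
qed

lemma arc_set_image_iff:
  assumes g: "strict_mono_on A g" and R: "R \<subseteq> A \<times> A"
  shows "arc_set (g ` A) (map_prod g g ` R) \<longleftrightarrow> arc_set A R"
proof -
  have inj: "inj_on g (Domain R)" "inj_on g (Range R)"
    using strict_mono_on_imp_inj_on[OF g] R by (auto intro: inj_on_subset)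
  have "g i < g j \<longleftrightarrow> i < j" if "(i, j) \<in> R" for i j
    using that R strict_mono_on_less[OF g] by blast
  then have less: "(\<forall>(i, j) \<in> map_prod g g ` R. i < j) \<longleftrightarrow> (\<forall>(i, j) \<in> R. i < j)"
    by fastforce
  have "(map_prod g g ` R)\<inverse> = map_prod g g ` R\<inverse>"
    by auto
  moreover have "Domain (R\<inverse>) = Range R" "Range (R\<inverse>) = Domain R"
    by auto
  ultimately have "single_valued ((map_prod g g ` R)\<inverse>) \<longleftrightarrow> single_valued (R\<inverse>)"
    using single_valued_map_prod_image_iff[of g "R\<inverse>" g] inj by simp
  then show ?thesis
    unfolding arc_set_def
    using R less single_valued_map_prod_image_iff[OF inj] by auto
qed

lemma enhanced_crossing3_image_iff:
  assumes g: "strict_mono_on A g" and R: "R \<subseteq> A \<times> A"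
  shows "enhanced_crossing3 (map_prod g g ` R) \<longleftrightarrow> enhanced_crossing3 R"
proof -
  have less: "g x < g y \<longleftrightarrow> x < y" and le: "g x \<le> g y \<longleftrightarrow> x \<le> y" if "x \<in> A" "y \<in> A" for x y
    using strict_mono_on_less[OF g that] strict_mono_on_less_eq[OF g that] by simp_all
  show ?thesis
  proof
    assume "enhanced_crossing3 (map_prod g g ` R)"
    then obtain i1 j1 i2 j2 i3 j3 where
      arcs: "(i1, j1) \<in> R" "(i2, j2) \<in> R" "(i3, j3) \<in> R" and
      order: "g i1 < g i2" "g i2 < g i3" "g i3 \<le> g j1" "g j1 < g j2" "g j2 < g j3"
      unfolding enhanced_crossing3_def by auto
    moreover have "i1 \<in> A" "j1 \<in> A" "i2 \<in> A" "j2 \<in> A" "i3 \<in> A" "j3 \<in> A"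
      using arcs R by auto
    ultimately show "enhanced_crossing3 R"
      unfolding enhanced_crossing3_def using less le by blast
  next
    assume "enhanced_crossing3 R"
    then obtain i1 j1 i2 j2 i3 j3 where
      arcs: "(i1, j1) \<in> R" "(i2, j2) \<in> R" "(i3, j3) \<in> R" and
      order: "i1 < i2" "i2 < i3" "i3 \<le> j1" "j1 < j2" "j2 < j3"
      unfolding enhanced_crossing3_def by blast
    moreover have "i1 \<in> A" "j1 \<in> A" "i2 \<in> A" "j2 \<in> A" "i3 \<in> A" "j3 \<in> A"
      using arcs R by auto
    ultimately have "(g i1, g j1) \<in> map_prod g g ` R" "(g i2, g j2) \<in> map_prod g g ` R"
      "(g i3, g j3) \<in> map_prod g g ` R"
      "g i1 < g i2" "g i2 < g i3" "g i3 \<le> g j1" "g j1 < g j2" "g j2 < g j3"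
      using less le by (auto intro: rev_image_eqI)
    then show "enhanced_crossing3 (map_prod g g ` R)"
      unfolding enhanced_crossing3_def by metis
  qed
qed

lemma card_arc_sets_image:
  assumes g: "strict_mono_on A g"
  shows "card {R. arc_set (g ` A) R \<and> \<not> enhanced_crossing3 R}
    = card {R. arc_set A R \<and> \<not> enhanced_crossing3 R}"
proof -
  have "bij_betw g A (g ` A)"
    using strict_mono_on_imp_inj_on[OF g] by (rule inj_on_imp_bij_betw)
  then have "bij_betw (image (map_prod g g)) (Pow (A \<times> A)) (Pow (g ` A \<times> g ` A))"
    by (intro bij_betw_Pow bij_betw_map_prod)
  then have "bij_betw (image (map_prod g g))
      {R \<in> Pow (A \<times> A). arc_set A R \<and> \<not> enhanced_crossing3 R}
      {R \<in> Pow (g ` A \<times> g ` A). arc_set (g ` A) R \<and> \<not> enhanced_crossing3 R}"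
    by (rule bij_betw_Collect) (simp add: arc_set_image_iff[OF g] enhanced_crossing3_image_iff[OF g])
  moreover have "{R \<in> Pow (B \<times> B). arc_set B R \<and> P R} = {R. arc_set B R \<and> P R}" for B P
    by (auto simp: arc_set_def)
  ultimately show ?thesis
    by (simp add: bij_betw_same_card)
qed

lemma finite_arc_sets:
  assumes "finite A"
  shows "finite {R. arc_set A R \<and> P R}"
  by (rule finite_subset[of _ "Pow (A \<times> A)"]) (auto simp: arc_set_def assms)

lemma C3_eq_card_arc_sets: "C3 n = card {R. arc_set {1..n} R \<and> \<not> crossing3 R}"
proof -
  have "bij_betw arcs {P \<in> {P. is_set_partition {1..n} P}. \<not> crossing3 (arcs P)}
      {R \<in> {R. arc_set {1..n} R}. \<not> crossing3 R}"
    by (rule bij_betw_Collect[OF bij_betw_arcs]) simp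
  then show ?thesis
    unfolding C3_def has_3_crossing_iff_crossing3 by (simp add: bij_betw_same_card)
qed

lemma E3_eq_card_arc_sets: "E3 n = card {R. arc_set {1..n} R \<and> \<not> enhanced_crossing3 R}"
proof -
  have "bij_betw arcs {P \<in> {P. is_set_partition {1..n} P}. \<not> enhanced_crossing3 (arcs P)}
      {R \<in> {R. arc_set {1..n} R}. \<not> enhanced_crossing3 R}"
    by (rule bij_betw_Collect[OF bij_betw_arcs]) simp
  then show ?thesis
    unfolding E3_def has_enhanced_3_crossing_iff_enhanced_crossing3
    by (simp add: bij_betw_same_card)
qed

lemma C3_Suc_eq_card_Sigma:
  "C3 (Suc n) = card (SIGMA S:Pow {1..n}. {R. arc_set S R \<and> \<not> enhanced_crossing3 R})"
proof -
  have "bij_betw (\<lambda>Q. ({1..n} - unit_arc_starts Q, shorten Q))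
      {Q \<in> {Q. arc_set {1..Suc n} Q}. \<not> crossing3 Q}
      {p \<in> (SIGMA S:Pow {1..n}. {R. arc_set S R}). \<not> enhanced_crossing3 (snd p)}"
    by (rule bij_betw_Collect[OF bij_betw_shorten])
      (simp add: crossing3_iff_enhanced_crossing3_shorten)
  moreover have "{p \<in> (SIGMA S:Pow {1..n}. {R. arc_set S R}). \<not> enhanced_crossing3 (snd p)}
      = (SIGMA S:Pow {1..n}. {R. arc_set S R \<and> \<not> enhanced_crossing3 R})"
    by auto
  ultimately show ?thesis
    unfolding C3_eq_card_arc_sets by (simp add: bij_betw_same_card)
qed

lemma obtain_strict_mono_on_atLeastAtMost:
  fixes S :: "nat set"
  assumes "finite S"
  obtains g where "strict_mono_on {1..card S} g" "g ` {1..card S} = S"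
proof
  let ?xs = "sorted_list_of_set S"
  define g where "g i = ?xs ! (i - 1)" for i
  have len: "length ?xs = card S" and sorted: "sorted_wrt (<) ?xs"
    by simp_all
  show "strict_mono_on {1..card S} g"
    unfolding g_def by (rule strict_mono_onI) (use sorted_wrt_nth_less[OF sorted] len in auto)
  have "(\<lambda>i. i - 1) ` {1..card S} = {0..<length ?xs}"
    using len by (force simp: image_iff)
  then have "g ` {1..card S} = (!) ?xs ` {0..<length ?xs}"
    unfolding g_def by (metis image_image)
  also have "\<dots> = S"
    using assms by (simp add: nth_image)
  finally show "g ` {1..card S} = S" .
qed

lemma card_arc_sets_eq_E3:
  assumes "finite S"
  shows "card {R. arc_set S R \<and> \<not> enhanced_crossing3 R} = E3 (card S)"
proof -
  obtain g where "strict_mono_on {1..card S} g" "g ` {1..card S} = S"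
    using obtain_strict_mono_on_atLeastAtMost[OF assms] .
  then show ?thesis
    using card_arc_sets_image[of "{1..card S}" g] E3_eq_card_arc_sets by simp
qed

lemma sum_Pow_card:
  fixes f :: "nat \<Rightarrow> 'a::comm_semiring_1"
  assumes "finite A"
  shows "(\<Sum>S\<in>Pow A. f (card S)) = (\<Sum>k=0..card A. of_nat (card A choose k) * f k)"
proof -
  have "(\<Sum>S\<in>Pow A. f (card S)) = (\<Sum>k=0..card A. \<Sum>S\<in>{S \<in> Pow A. card S = k}. f (card S))"
    using assms by (intro sum.group[symmetric]) (auto simp: card_mono)
  also have "\<dots> = (\<Sum>k=0..card A. of_nat (card A choose k) * f k)"
  proof (rule sum.cong)
    fix k
    have "(\<Sum>S\<in>{S \<in> Pow A. card S = k}. f (card S)) = (\<Sum>S\<in>{S. S \<subseteq> A \<and> card S = k}. f k)"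
      by (rule sum.cong) auto
    then show "(\<Sum>S\<in>{S \<in> Pow A. card S = k}. f (card S)) = of_nat (card A choose k) * f k"
      using n_subsets[OF assms, of k] by simp
  qed simp
  finally show ?thesis .
qed

theorem mainTheorem2:
  fixes n :: nat
  shows "C3 (n + 1) = (\<Sum>i = 0..n. (n choose i) * E3 i)"
proof -
  have "C3 (n + 1) = card (SIGMA S:Pow {1..n}. {R. arc_set S R \<and> \<not> enhanced_crossing3 R})"
    using C3_Suc_eq_card_Sigma by simp
  also have "\<dots> = (\<Sum>S\<in>Pow {1..n}. card {R. arc_set S R \<and> \<not> enhanced_crossing3 R})"
    by (rule card_SigmaI) (auto intro!: finite_arc_sets intro: finite_subset[OF _ finite_atLeastAtMost])
  also have "\<dots> = (\<Sum>S\<in>Pow {1..n}. E3 (card S))"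
    by (rule sum.cong) (auto intro!: card_arc_sets_eq_E3 intro: finite_subset[OF _ finite_atLeastAtMost])
  also have "\<dots> = (\<Sum>i = 0..n. (n choose i) * E3 i)"
    using sum_Pow_card[of "{1..n}" E3] by simp
  finally show ?thesis .
qed

end
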